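(* Fix $\hat P_0\in\mathbb S^n_+$. Let $\mathcal C(\hat P_0)$ be the set of all matrices $\hat P_i$, $i\in\mathbb Z_+$, generated by the inexact value iteration $\hat P_{i+1}=\mathcal R(\hat P_i,S)+\Delta_i$ started from $\hat P_0$, over all disturbance sequences $\{\Delta_i\}_{i\ge0}\subset\mathbb S^n$ with $\sup_{i}\|\Delta_i\|_2<\lambda_{\min}(S)$. Then the closure $\overline{\mathcal C(\hat P_0)}$ is compact.
   Context: Let $n,m\ge 1$, $A\in\mathbb R^{n\times n}$, $B\in\mathbb R^{n\times m}$, $S\in\mathbb S^n_{++}$, $R\in\mathbb S^m_{++}$, with $(A,B)$ stabilizable. Here $\mathbb S^n$, $\mathbb S^n_+$, $\mathbb S^n_{++}$ denote the real symmetric, symmetric positive semidefinite, and symmetric positive definite $n\times n$ matrices; $\|\cdot\|_2$ is the spectral norm; $\lambda_{\min}$ is the smallest eigenvalue. For $P\in\mathbb S^n_+$ and $S'\in\mathbb S^n$, the Riccati operator is $\mathcal R(P,S')=A^\top PA-A^\top PB(R+B^\top PB)^{-1}B^\top PA+S'$. *)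

theory Defs
  imports "HOL-Analysis.Analysis"
begin

definition sym_mat :: "real^'n^'n \<Rightarrow> bool" where
  "sym_mat M \<longleftrightarrow> transpose M = M"

definition psd_mat :: "real^'n^'n \<Rightarrow> bool" where
  "psd_mat M \<longleftrightarrow> sym_mat M \<and> (\<forall>x. 0 \<le> x \<bullet> (M *v x))"

definition pd_mat :: "real^'n^'n \<Rightarrow> bool" where
  "pd_mat M \<longleftrightarrow> sym_mat M \<and> (\<forall>x. x \<noteq> 0 \<longrightarrow> 0 < x \<bullet> (M *v x))"

definition spec_norm :: "real^'n^'m \<Rightarrow> real" where
  "spec_norm M = onorm (\<lambda>x. M *v x)"

definition lambda_min :: "real^'n^'n \<Rightarrow> real" where
  "lambda_min M = Min {l. \<exists>v. v \<noteq> 0 \<and> M *v v = l *\<^sub>R v}"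

definition cplx_mat :: "real^'n^'n \<Rightarrow> complex^'n^'n" where
  "cplx_mat M = (\<chi> i j. complex_of_real (M $ i $ j))"

definition is_eigenvalue :: "real^'n^'n \<Rightarrow> complex \<Rightarrow> bool" where
  "is_eigenvalue M l \<longleftrightarrow> (\<exists>v. v \<noteq> 0 \<and> cplx_mat M *v v = l *s v)"

definition schur_stable :: "real^'n^'n \<Rightarrow> bool" where
  "schur_stable M \<longleftrightarrow> (\<forall>l. is_eigenvalue M l \<longrightarrow> cmod l < 1)"

definition stabilizable :: "real^'n^'n \<Rightarrow> real^'m^'n \<Rightarrow> bool" where
  "stabilizable A B \<longleftrightarrow> (\<exists>K :: real^'n^'m. schur_stable (A - B ** K))"

definition riccati ::
  "real^'n^'n \<Rightarrow> real^'m^'n \<Rightarrow> real^'m^'m \<Rightarrow> real^'n^'n \<Rightarrow> real^'n^'n \<Rightarrow> real^'n^'n" where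
  "riccati A B R P S' =
     transpose A ** P ** A
     - transpose A ** P ** B ** matrix_inv (R + transpose B ** P ** B) ** transpose B ** P ** A
     + S'"

primrec inexact_vi ::
  "real^'n^'n \<Rightarrow> real^'m^'n \<Rightarrow> real^'m^'m \<Rightarrow> real^'n^'n \<Rightarrow> real^'n^'n
   \<Rightarrow> (nat \<Rightarrow> real^'n^'n) \<Rightarrow> nat \<Rightarrow> real^'n^'n" where
  "inexact_vi A B R S P0 D 0 = P0"
| "inexact_vi A B R S P0 D (Suc i) = riccati A B R (inexact_vi A B R S P0 D i) S + D i"

definition reach_set ::
  "real^'n^'n \<Rightarrow> real^'m^'n \<Rightarrow> real^'m^'m \<Rightarrow> real^'n^'n \<Rightarrow> real^'n^'n \<Rightarrow> (real^'n^'n) set" where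
  "reach_set A B R S P0 =
    {P. \<exists>D i. (\<forall>k. sym_mat (D k)) \<and> bdd_above (range (\<lambda>k. spec_norm (D k)))
            \<and> (SUP k. spec_norm (D k)) < lambda_min S
            \<and> P = inexact_vi A B R S P0 D i}"

end

theory Submission
  imports Defs "Jordan_Normal_Form.Spectral_Radius"
begin

(* Choose a stabilising gain K. Since R(P,S) is the minimum over inputs z of the one-step cost
   (Ax - Bz)'P(Ax - Bz) + z'Rz + x'Sx, taking z = Kx gives
   x'R(P,S)x <= (Lx)'P(Lx) + x'(K'RK + S)x with L = A - BK Schur stable, so that L^k decays
   geometrically.  Unrolling this along the inexact iteration and summing the geometric series
   bounds every iterate, uniformly in the disturbances, by a fixed multiple of the identity.
   The condition ||Delta_i|| < lambda_min(S) keeps S + Delta_i, and hence every iterate, positive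
   semidefinite; so the iterates have uniformly bounded entries and the reachable set is bounded. *)

no_notation Matrix.vec_index (infixl \<open>$\<close> 100)

section \<open>Geometric decay of the powers of a Schur stable matrix\<close>

primrec matrix_pow :: "real^'n^'n \<Rightarrow> nat \<Rightarrow> real^'n^'n" where
  "matrix_pow M 0 = Finite_Cartesian_Product.mat 1"
| "matrix_pow M (Suc k) = matrix_pow M k ** M"

lemma matrix_pow_scaleR: "matrix_pow (c *\<^sub>R M) k = c ^ k *\<^sub>R matrix_pow M k"
  by (induction k) (auto simp: matrix_scalar_ac scalar_matrix_assoc)

lemma funpow_matrix_vector_mult: "((*v) M ^^ k) x = matrix_pow M k *v x"
  by (induction k arbitrary: x)
    (simp_all add: funpow_Suc_right matrix_vector_mul_assoc del: funpow.simps)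

lemma eigenvalue_smult_mat:
  assumes A: "A \<in> carrier_mat n n" and "eigenvalue A l"
  shows "eigenvalue (c \<cdot>\<^sub>m A) (c * l)"
proof -
  from assms obtain v where v: "v \<in> carrier_vec n" "v \<noteq> 0\<^sub>v n" "A *\<^sub>v v = l \<cdot>\<^sub>v v"
    unfolding eigenvalue_def eigenvector_def by auto
  have "(c \<cdot>\<^sub>m A) *\<^sub>v v = c \<cdot>\<^sub>v (A *\<^sub>v v)"
    using A v(1) by (intro eq_vecI) (auto simp: scalar_prod_def sum_distrib_left mult.assoc)
  also have "\<dots> = (c * l) \<cdot>\<^sub>v v"
    by (simp add: v(3) smult_smult_assoc)
  finally show ?thesis
    using A v unfolding eigenvalue_def eigenvector_def by auto
qed

definition enum_index :: "nat \<Rightarrow> 'n::finite" where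
  "enum_index = (SOME h. bij_betw h {0..<CARD('n)} UNIV)"

lemma bij_enum_index: "bij_betw enum_index {0..<CARD('n)} (UNIV :: 'n::finite set)"
proof -
  have "\<exists>h. bij_betw h {0..<CARD('n)} (UNIV :: 'n set)"
    using ex_bij_betw_nat_finite[of "UNIV :: 'n set"] by simp
  then show ?thesis
    unfolding enum_index_def by (rule someI_ex)
qed

lemma enum_index_onto: "(a :: 'n::finite) \<in> enum_index ` {0..<CARD('n)}"
  using bij_enum_index unfolding bij_betw_def by auto

lemma enum_index_eq_iff:
  "i < CARD('n) \<Longrightarrow> j < CARD('n) \<Longrightarrow> enum_index i = (enum_index j :: 'n::finite) \<longleftrightarrow> i = j"
  using bij_enum_index[where 'n = 'n] unfolding bij_betw_def inj_on_def by auto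

(* The spectral radius theory of Jordan_Normal_Form is stated for complex matrices indexed by
   natural numbers. *)
definition jnf_of :: "real^'n^'n \<Rightarrow> complex Matrix.mat" where
  "jnf_of X = Matrix.mat CARD('n) CARD('n)
     (\<lambda>(i, j). complex_of_real (X $ enum_index i $ enum_index j))"

lemma jnf_of_carrier [simp]: "jnf_of (X :: real^'n^'n) \<in> carrier_mat CARD('n) CARD('n)"
  by (simp add: jnf_of_def)

lemma dim_jnf_of [simp]:
  "dim_row (jnf_of (X :: real^'n^'n)) = CARD('n)" "dim_col (jnf_of (X :: real^'n^'n)) = CARD('n)"
  by (simp_all add: jnf_of_def)

lemma jnf_of_index [simp]:
  "i < CARD('n) \<Longrightarrow> j < CARD('n) \<Longrightarrow>
     jnf_of (X :: real^'n^'n) $$ (i, j) = complex_of_real (X $ enum_index i $ enum_index j)"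
  by (simp add: jnf_of_def)

lemma jnf_of_mult: "jnf_of (X ** Y) = jnf_of X * jnf_of (Y :: real^'n^'n)"
proof (rule eq_matI)
  fix i j assume "i < dim_row (jnf_of X * jnf_of Y)" "j < dim_col (jnf_of X * jnf_of Y)"
  then have ij: "i < CARD('n)" "j < CARD('n)"
    by (simp_all add: jnf_of_def)
  have "(jnf_of X * jnf_of Y) $$ (i, j)
      = (\<Sum>k\<in>{0..<CARD('n)}. complex_of_real
           (X $ enum_index i $ enum_index k * Y $ enum_index k $ enum_index j))"
    using ij by (simp add: jnf_of_def scalar_prod_def)
  also have "\<dots> = complex_of_real (\<Sum>k\<in>UNIV. X $ enum_index i $ k * Y $ k $ enum_index j)"
    unfolding of_real_sum[symmetric]
    using sum.reindex_bij_betw[OF bij_enum_index,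
        of "\<lambda>k. X $ enum_index i $ k * Y $ k $ enum_index j"]
    by simp
  finally show "jnf_of (X ** Y) $$ (i, j) = (jnf_of X * jnf_of Y) $$ (i, j)"
    using ij by (simp add: matrix_matrix_mult_def)
qed (simp_all add: jnf_of_def)

lemma jnf_of_one: "jnf_of (Finite_Cartesian_Product.mat 1 :: real^'n^'n) = 1\<^sub>m CARD('n)"
proof (rule eq_matI)
  fix i j assume "i < dim_row (1\<^sub>m CARD('n))" "j < dim_col (1\<^sub>m CARD('n))"
  then have "i < CARD('n)" "j < CARD('n)" by simp_all
  then show "jnf_of (Finite_Cartesian_Product.mat 1 :: real^'n^'n) $$ (i, j) = 1\<^sub>m CARD('n) $$ (i, j)"
    by (simp add: Finite_Cartesian_Product.mat_def enum_index_eq_iff)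
qed (simp_all add: jnf_of_def)

lemma jnf_of_matrix_pow: "jnf_of (matrix_pow X k) = jnf_of X ^\<^sub>m k"
  by (induction k) (simp_all add: jnf_of_one jnf_of_mult)

lemma abs_entry_le_if_norm_bound_jnf_of:
  fixes X :: "real^'n^'n"
  assumes "norm_bound (jnf_of X) b"
  shows "\<bar>X $ i $ j\<bar> \<le> b"
proof -
  obtain i' j' where "i' < CARD('n)" "j' < CARD('n)" "i = enum_index i'" "j = enum_index j'"
    using enum_index_onto[of i] enum_index_onto[of j] by auto
  then show ?thesis
    using assms unfolding norm_bound_def by (auto simp: jnf_of_def)
qed

lemma is_eigenvalue_if_eigenvalue_jnf_of:
  fixes X :: "real^'n^'n"
  assumes "eigenvalue (jnf_of X) l"
  shows "is_eigenvalue X l"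
proof -
  let ?N = "CARD('n)"
  obtain v where v: "v \<in> carrier_vec ?N" "v \<noteq> 0\<^sub>v ?N" "jnf_of X *\<^sub>v v = l \<cdot>\<^sub>v v"
    using assms unfolding eigenvalue_def eigenvector_def by auto
  define idx where "idx = inv_into {0..<?N} (enum_index :: nat \<Rightarrow> 'n)"
  have idx: "idx a < ?N" "enum_index (idx a) = a" for a
    using inv_into_into[OF enum_index_onto] f_inv_into_f[OF enum_index_onto]
    unfolding idx_def by auto
  have idx_enum: "idx (enum_index i) = i" if "i < ?N" for i
    using bij_enum_index[where 'n = 'n] that unfolding idx_def bij_betw_def by auto
  define w :: "complex^'n" where "w = (\<chi> a. vec_index v (idx a))"
  have "cplx_mat X *v w = l *s w"
  proof (rule Finite_Cartesian_Product.vec_eq_iff[THEN iffD2], rule allI)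
    fix a
    have "(cplx_mat X *v w) $ a
        = (\<Sum>b\<in>UNIV. complex_of_real (X $ a $ b) * vec_index v (idx b))"
      by (simp add: matrix_vector_mult_def cplx_mat_def w_def)
    also have "\<dots> = (\<Sum>k\<in>{0..<?N}. complex_of_real (X $ a $ enum_index k) * vec_index v k)"
      using sum.reindex_bij_betw[OF bij_enum_index,
          of "\<lambda>b. complex_of_real (X $ a $ b) * vec_index v (idx b)"]
      by (simp add: idx_enum)
    also have "\<dots> = vec_index (jnf_of X *\<^sub>v v) (idx a)"
      using idx[of a] v(1) by (simp add: jnf_of_def scalar_prod_def mult.commute)
    also have "\<dots> = (l *s w) $ a"
      using v(1,3) idx[of a] by (simp add: w_def)
    finally show "(cplx_mat X *v w) $ a = (l *s w) $ a" .
  qed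
  moreover have "w \<noteq> 0"
  proof
    assume "w = 0"
    then have "vec_index v i = 0" if "i < ?N" for i
      using idx_enum[OF that] by (metis vec_lambda_beta w_def zero_index)
    then have "v = 0\<^sub>v ?N"
      using v(1) by (intro eq_vecI) auto
    with v(2) show False ..
  qed
  ultimately show ?thesis
    unfolding is_eigenvalue_def by blast
qed

lemma spectral_radius_jnf_of_less_1:
  fixes M :: "real^'n^'n"
  assumes "schur_stable M"
  shows "spectral_radius (jnf_of M) < 1"
proof -
  obtain l where "eigenvalue (jnf_of M) l" "spectral_radius (jnf_of M) = norm l"
    using spectral_radius_mem_max(1)[OF jnf_of_carrier] by (auto simp: spectrum_def)
  with assms show ?thesis
    unfolding schur_stable_def by (auto dest: is_eigenvalue_if_eigenvalue_jnf_of)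
qed

lemma spectral_radius_jnf_of_scaleR_le:
  fixes M :: "real^'n^'n"
  assumes "0 < c"
  shows "spectral_radius (jnf_of (c *\<^sub>R M)) \<le> c * spectral_radius (jnf_of M)"
proof -
  obtain l where l: "eigenvalue (jnf_of (c *\<^sub>R M)) l" "spectral_radius (jnf_of (c *\<^sub>R M)) = norm l"
    using spectral_radius_mem_max(1)[OF jnf_of_carrier] by (auto simp: spectrum_def)
  have "complex_of_real (1 / c) \<cdot>\<^sub>m jnf_of (c *\<^sub>R M) = jnf_of M"
    using assms by (intro eq_matI) (simp_all add: jnf_of_def)
  with eigenvalue_smult_mat[OF jnf_of_carrier l(1), of "complex_of_real (1 / c)"]
  have "eigenvalue (jnf_of M) (complex_of_real (1 / c) * l)"
    by simp
  then have "norm (complex_of_real (1 / c) * l) \<le> spectral_radius (jnf_of M)"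
    by (intro spectral_radius_mem_max(2)[OF jnf_of_carrier]) (auto simp: spectrum_def)
  with assms l(2) show ?thesis
    by (simp add: norm_divide pos_divide_le_eq mult.commute)
qed

lemma schur_stable_power_decay:
  fixes M :: "real^'n^'n"
  assumes "schur_stable M"
  obtains c r where "0 \<le> r" "r < 1" "\<And>k x. norm (((*v) M ^^ k) x) \<le> c * r ^ k * norm x"
proof -
  (* For \<rho>(M) < r < 1 the powers of M/r are bounded, so those of M decay like r^k. *)
  define \<rho> where "\<rho> = spectral_radius (jnf_of M)"
  have "\<rho> < 1"
    unfolding \<rho>_def using assms by (rule spectral_radius_jnf_of_less_1)
  moreover have "0 \<le> \<rho>"
    using spectral_radius_mem_max(1)[OF jnf_of_carrier, of M] unfolding \<rho>_def by auto
  moreover define r where "r = (\<rho> + 1) / 2"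
  ultimately have r: "\<rho> < r" "r < 1" "0 < r"
    by simp_all
  define M' where "M' = (1 / r) *\<^sub>R M"
  have "spectral_radius (jnf_of M') \<le> \<rho> / r"
    using spectral_radius_jnf_of_scaleR_le[of "1 / r" M] r unfolding M'_def \<rho>_def by simp
  also have "\<dots> < 1"
    using r by simp
  finally obtain b where b: "\<And>k. norm_bound (jnf_of M' ^\<^sub>m k) b"
    using spectral_radius_jnf_norm_bound_less_1_upper_triangular[OF jnf_of_carrier] by blast
  define C where "C = real CARD('n) * real CARD('n) * b"
  have decay: "norm (((*v) M ^^ k) x) \<le> C * r ^ k * norm x" for k x
  proof -
    have "\<bar>matrix_pow M' k $ i $ j\<bar> \<le> b" for i j
      using b[of k] by (intro abs_entry_le_if_norm_bound_jnf_of) (simp add: jnf_of_matrix_pow)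
    then have "onorm ((*v) (matrix_pow M' k)) \<le> C"
      using onorm_le_matrix_component[of "matrix_pow M' k" b] unfolding C_def by blast
    then have bound: "norm (matrix_pow M' k *v x) \<le> C * norm x"
      using onorm[OF matrix_vector_mul_bounded_linear, of "matrix_pow M' k" x]
      by (metis mult_right_mono norm_ge_zero order_trans)
    have "matrix_pow M k = r ^ k *\<^sub>R matrix_pow M' k"
      using r by (simp add: M'_def matrix_pow_scaleR[symmetric])
    then have "norm (((*v) M ^^ k) x) = r ^ k * norm (matrix_pow M' k *v x)"
      using r by (simp add: funpow_matrix_vector_mult scaleR_matrix_vector_assoc[symmetric])
    also have "\<dots> \<le> r ^ k * (C * norm x)"
      using bound r by (simp add: mult_left_mono)
    finally show ?thesis
      by (simp add: algebra_simps)
  qed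
  show ?thesis
    using r decay by (intro that[of r C]) auto
qed

section \<open>Quadratic forms\<close>

lemma transpose_add: "transpose (X + Y) = transpose X + transpose (Y :: real^'n^'m)"
  by (simp add: Finite_Cartesian_Product.vec_eq_iff transpose_def)

lemma transpose_diff: "transpose (X - Y) = transpose X - transpose (Y :: real^'n^'m)"
  by (simp add: Finite_Cartesian_Product.vec_eq_iff transpose_def)

lemma inner_vector_matrix_mult:
  fixes A :: "real^'n^'m"
  shows "x \<bullet> (y v* A) = (A *v x) \<bullet> y"
  using dot_lmul_matrix[of y A x] by (simp add: inner_commute)

lemma inner_sym_mat: "sym_mat (M :: real^'n^'n) \<Longrightarrow> (M *v x) \<bullet> y = x \<bullet> (M *v y)"
  using dot_lmul_matrix[of x M y] transpose_matrix_vector[of M x] unfolding sym_mat_def by simp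

lemma quadratic_form_congruence:
  fixes B :: "real^'n^'m"
  shows "x \<bullet> ((transpose B ** P ** B) *v x) = (B *v x) \<bullet> (P *v (B *v x))"
  by (simp add: matrix_vector_mul_assoc[symmetric] inner_vector_matrix_mult)

lemma abs_quadratic_form_le_spec_norm:
  fixes M :: "real^'n^'n"
  shows "\<bar>x \<bullet> (M *v x)\<bar> \<le> spec_norm M * (x \<bullet> x)"
proof -
  have "\<bar>x \<bullet> (M *v x)\<bar> \<le> norm x * norm (M *v x)"
    by (rule Cauchy_Schwarz_ineq2)
  also have "\<dots> \<le> norm x * (spec_norm M * norm x)"
    unfolding spec_norm_def by (intro mult_left_mono onorm matrix_vector_mul_bounded_linear) simp
  finally show ?thesis
    by (simp add: power2_norm_eq_inner[symmetric] power2_eq_square mult.commute mult.left_commute)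
qed

lemma spec_norm_nonneg: "0 \<le> spec_norm (M :: real^'n^'m)"
  unfolding spec_norm_def by (rule onorm_pos_le[OF matrix_vector_mul_bounded_linear])

lemma finite_real_eigenvalues_sym:
  fixes S :: "real^'n^'n"
  assumes "sym_mat S"
  shows "finite {l. \<exists>v. v \<noteq> 0 \<and> S *v v = l *\<^sub>R v}" (is "finite ?E")
proof -
  define ev where "ev l = (SOME v. v \<noteq> 0 \<and> S *v v = l *\<^sub>R v)" for l
  have ev: "ev l \<noteq> 0" "S *v ev l = l *\<^sub>R ev l" if "l \<in> ?E" for l
    using someI_ex[of "\<lambda>v. v \<noteq> 0 \<and> S *v v = l *\<^sub>R v"] that unfolding ev_def by auto
  have inj: "inj_on ev ?E"
  proof (rule inj_onI)
    fix a b assume "a \<in> ?E" "b \<in> ?E" "ev a = ev b"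
    have "a *\<^sub>R ev a = S *v ev a"
      using ev(2)[OF \<open>a \<in> ?E\<close>] by simp
    also have "\<dots> = b *\<^sub>R ev a"
      using ev(2)[OF \<open>b \<in> ?E\<close>] \<open>ev a = ev b\<close> by simp
    finally show "a = b"
      using ev(1)[OF \<open>a \<in> ?E\<close>] by simp
  qed
  have "pairwise real_inner_class.orthogonal (ev ` ?E)"
  proof (rule pairwise_imageI)
    fix a b assume ab: "a \<in> ?E" "b \<in> ?E" "a \<noteq> b"
    have "a * (ev a \<bullet> ev b) = b * (ev a \<bullet> ev b)"
      using inner_sym_mat[OF assms, of "ev a" "ev b"] ev(2)[OF ab(1)] ev(2)[OF ab(2)] by simp
    with ab(3) show "real_inner_class.orthogonal (ev a) (ev b)"
      unfolding real_inner_class.orthogonal_def by simp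
  qed
  moreover have "0 \<notin> ev ` ?E"
    using ev(1) by force
  ultimately have "finite (ev ` ?E)"
    by (intro finiteI_independent pairwise_orthogonal_independent)
  then show ?thesis
    using finite_imageD[OF _ inj] by blast
qed

lemma psd_quadratic_form_eq_0_imp_mult_eq_0:
  fixes P :: "real^'n^'n"
  assumes P: "psd_mat P" and u: "u \<bullet> (P *v u) = 0"
  shows "P *v u = 0"
proof -
  define y where "y = P *v u"
  define a where "a = y \<bullet> y"
  define q where "q = y \<bullet> (P *v y)"
  have "0 \<le> q"
    using P unfolding q_def psd_mat_def by simp
  have along_y: "0 \<le> t * (t * q - 2 * a)" for t
  proof -
    have "0 \<le> (u - t *\<^sub>R y) \<bullet> (P *v (u - t *\<^sub>R y))"
      using P unfolding psd_mat_def by simp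
    also have "\<dots> = t * (t * q - 2 * a)"
      using u inner_sym_mat[of P u y] P
      unfolding a_def q_def y_def psd_mat_def
      by (simp add: matrix_vector_mult_diff_distrib matrix_vector_mult_scaleR
          inner_diff_left inner_diff_right algebra_simps)
    finally show ?thesis .
  qed
  have "a \<le> 0"
  proof (rule ccontr)
    assume "\<not> a \<le> 0"
    define t where "t = a / (q + 1)"
    have "0 < t"
      using \<open>\<not> a \<le> 0\<close> \<open>0 \<le> q\<close> unfolding t_def by simp
    then have "2 * a \<le> t * q"
      using along_y[of t] by (simp add: zero_le_mult_iff)
    moreover have "t * q \<le> a"
      using \<open>\<not> a \<le> 0\<close> \<open>0 \<le> q\<close> unfolding t_def by (simp add: field_simps)
    ultimately show False
      using \<open>\<not> a \<le> 0\<close> by linarith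
  qed
  then show ?thesis
    unfolding a_def y_def by (metis inner_gt_zero_iff not_le)
qed

lemma lambda_min_le_quadratic_form:
  fixes S :: "real^'n^'n"
  assumes "sym_mat S"
  shows "lambda_min S * (x \<bullet> x) \<le> x \<bullet> (S *v x)"
proof -
  have "continuous_on (sphere 0 1) (\<lambda>v. v \<bullet> (S *v v))"
    by (intro continuous_intros linear_continuous_on matrix_vector_mul_bounded_linear)
  then obtain u where u: "norm u = 1"
    and min: "\<And>v. norm v = 1 \<Longrightarrow> u \<bullet> (S *v u) \<le> v \<bullet> (S *v v)"
    using continuous_attains_inf[OF compact_sphere, of 0 1] by fastforce
  define m where "m = u \<bullet> (S *v u)"
  have rayleigh: "m * (v \<bullet> v) \<le> v \<bullet> (S *v v)" for v
  proof (cases "v = 0")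
    case False
    have "m \<le> (v /\<^sub>R norm v) \<bullet> (S *v (v /\<^sub>R norm v))"
      unfolding m_def using False by (intro min) simp
    also have "\<dots> = v \<bullet> (S *v v) / (v \<bullet> v)"
      using False by (simp add: matrix_vector_mult_scaleR field_simps
          power2_norm_eq_inner[symmetric] power2_eq_square)
    finally show ?thesis
      using False by (simp add: pos_le_divide_eq)
  qed simp
  (* m is an eigenvalue: S - m I is positive semidefinite and its form vanishes at u. *)
  define T where "T = S - m *\<^sub>R Finite_Cartesian_Product.mat 1"
  have T_mult: "T *v v = S *v v - m *\<^sub>R v" for v
    unfolding T_def by (simp add: matrix_vector_mult_diff_rdistrib scaleR_matrix_vector_assoc[symmetric])
  have "psd_mat T"
    using assms rayleigh
    unfolding psd_mat_def sym_mat_def T_def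
    by (simp add: transpose_diff transpose_scalar matrix_vector_mult_diff_rdistrib
        scaleR_matrix_vector_assoc[symmetric] inner_diff_right)
  moreover have "u \<bullet> (T *v u) = 0"
    using u by (simp add: T_mult m_def inner_diff_right power2_norm_eq_inner[symmetric])
  ultimately have "S *v u = m *\<^sub>R u"
    using psd_quadratic_form_eq_0_imp_mult_eq_0 T_mult by fastforce
  with u have "lambda_min S \<le> m"
    unfolding lambda_min_def
    by (intro Min_le finite_real_eigenvalues_sym[OF assms]) (auto intro!: exI[of _ u])
  then have "lambda_min S * (x \<bullet> x) \<le> m * (x \<bullet> x)"
    by (simp add: mult_right_mono)
  also have "\<dots> \<le> x \<bullet> (S *v x)"
    by (rule rayleigh)
  finally show ?thesis .
qed

lemma psd_add_if_spec_norm_le_lambda_min: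
  assumes "sym_mat S" "sym_mat D" "spec_norm D \<le> lambda_min S"
  shows "psd_mat (S + D)"
proof -
  have "0 \<le> x \<bullet> (S *v x) + x \<bullet> (D *v x)" for x
  proof -
    have "spec_norm D * (x \<bullet> x) \<le> lambda_min S * (x \<bullet> x)"
      using assms(3) by (simp add: mult_right_mono)
    then show ?thesis
      using lambda_min_le_quadratic_form[OF assms(1), of x]
        abs_quadratic_form_le_spec_norm[of x D] by linarith
  qed
  with assms(1,2) show ?thesis
    unfolding psd_mat_def sym_mat_def
    by (simp add: transpose_add matrix_vector_mult_add_rdistrib inner_add_right)
qed

lemma abs_entry_le_if_quadratic_form_le:
  fixes P :: "real^'n^'n"
  assumes P: "psd_mat P" and le: "\<And>x. x \<bullet> (P *v x) \<le> G * (x \<bullet> x)"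
  shows "\<bar>P $ i $ j\<bar> \<le> G"
proof -
  define u :: "real^'n" where "u = axis i 1 + axis j 1"
  define v :: "real^'n" where "v = axis i 1 - axis j 1"
  have entry: "axis k 1 \<bullet> (P *v axis l 1) = P $ k $ l" for k l
    by (simp add: inner_axis' matrix_vector_mult_basis column_def)
  have "P $ j $ i = P $ i $ j"
    using P unfolding psd_mat_def sym_mat_def by (metis transpose_def vec_lambda_beta)
  then have entry_ij: "4 * P $ i $ j = u \<bullet> (P *v u) - v \<bullet> (P *v v)"
    unfolding u_def v_def
    by (simp add: matrix_vector_right_distrib matrix_vector_mult_diff_distrib
        inner_add_left inner_add_right inner_diff_left inner_diff_right entry)
  have "u \<bullet> u + v \<bullet> v = 4"
    unfolding u_def v_def
    by (simp add: inner_add_left inner_add_right inner_diff_left inner_diff_right inner_axis_axis)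
  then have "u \<bullet> (P *v u) + v \<bullet> (P *v v) \<le> 4 * G"
    using add_mono[OF le[of u] le[of v]] by (metis distrib_left mult.commute)
  moreover have "0 \<le> u \<bullet> (P *v u)" "0 \<le> v \<bullet> (P *v v)"
    using P unfolding psd_mat_def by simp_all
  ultimately show ?thesis
    using entry_ij unfolding abs_le_iff by linarith
qed

lemma bounded_entrywise: "bounded {P :: real^'n^'m. \<forall>i j. \<bar>P $ i $ j\<bar> \<le> G}"
proof -
  have "norm P \<le> norm ((\<chi> i j. G) :: real^'n^'m)"
    if "\<forall>i j. \<bar>P $ i $ j\<bar> \<le> G" for P :: "real^'n^'m"
  proof (rule norm_le_componentwise_cart)
    fix i
    show "norm (P $ i) \<le> norm (((\<chi> i j. G) :: real^'n^'m) $ i)"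
      using that by (intro norm_le_componentwise_cart) (simp, meson abs_ge_self order_trans)
  qed
  then show ?thesis
    unfolding bounded_iff by blast
qed

lemma pd_imp_psd: "pd_mat M \<Longrightarrow> psd_mat M"
  unfolding pd_mat_def psd_mat_def by (metis inner_zero_left less_eq_real_def)

lemma psd_add_congruence:
  fixes R :: "real^'m^'m" and B :: "real^'m^'n" and P :: "real^'n^'n"
  assumes "psd_mat R" "psd_mat P"
  shows "psd_mat (R + transpose B ** P ** B)"
  using assms unfolding psd_mat_def sym_mat_def
  by (simp add: transpose_add matrix_transpose_mul matrix_mul_assoc
      matrix_vector_mult_add_rdistrib inner_add_right quadratic_form_congruence)

section \<open>The Riccati operator\<close>

lemma invertible_add_congruence:
  fixes R :: "real^'m^'m" and B :: "real^'m^'n" and P :: "real^'n^'n"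
  assumes "pd_mat R" "psd_mat P"
  shows "invertible (R + transpose B ** P ** B)"
proof -
  have "z = 0" if "(R + transpose B ** P ** B) *v z = 0" for z
  proof (rule ccontr)
    assume "z \<noteq> 0"
    then have "0 < z \<bullet> (R *v z) + (B *v z) \<bullet> (P *v (B *v z))"
      using assms unfolding pd_mat_def psd_mat_def by (simp add: add_pos_nonneg)
    also have "\<dots> = z \<bullet> ((R + transpose B ** P ** B) *v z)"
      by (simp add: matrix_vector_mult_add_rdistrib inner_add_right quadratic_form_congruence)
    finally show False
      using that by simp
  qed
  then show ?thesis
    using matrix_left_invertible_ker invertible_left_inverse by blast
qed

lemma matrix_inv_right:
  fixes M :: "real^'n^'n"
  assumes "invertible M"
  shows "M ** matrix_inv M = Finite_Cartesian_Product.mat 1"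
  using someI_ex[OF assms[unfolded invertible_def]] unfolding matrix_inv_def by auto

lemma sym_matrix_inv:
  fixes M :: "real^'n^'n"
  assumes "invertible M" "sym_mat M"
  shows "sym_mat (matrix_inv M)"
proof -
  have left_inv: "transpose (matrix_inv M) ** M = Finite_Cartesian_Product.mat 1"
    using arg_cong[OF matrix_inv_right[OF assms(1)], of transpose] assms(2)
    by (simp add: sym_mat_def matrix_transpose_mul)
  have "transpose (matrix_inv M) = transpose (matrix_inv M) ** (M ** matrix_inv M)"
    by (simp add: matrix_inv_right[OF assms(1)] matrix_mul_rid)
  also have "\<dots> = matrix_inv M"
    by (simp add: matrix_mul_assoc left_inv matrix_mul_lid)
  finally show ?thesis
    unfolding sym_mat_def .
qed

lemma sym_riccati:
  fixes A :: "real^'n^'n" and B :: "real^'m^'n" and R :: "real^'m^'m"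
  assumes "sym_mat P" "sym_mat R" "sym_mat S'" "invertible (R + transpose B ** P ** B)"
  shows "sym_mat (riccati A B R P S')"
proof -
  have "sym_mat (R + transpose B ** P ** B)"
    using assms(1,2) by (simp add: sym_mat_def transpose_add matrix_transpose_mul matrix_mul_assoc)
  with assms(4) have "sym_mat (matrix_inv (R + transpose B ** P ** B))"
    by (rule sym_matrix_inv)
  with assms(1,3) show ?thesis
    unfolding riccati_def sym_mat_def
    by (simp add: transpose_add transpose_diff matrix_transpose_mul matrix_mul_assoc)
qed

lemma riccati_completion_of_squares:
  fixes A :: "real^'n^'n" and B :: "real^'m^'n" and R :: "real^'m^'m" and x :: "real^'n"
  assumes P: "sym_mat P" and R: "sym_mat R" and inv: "invertible (R + transpose B ** P ** B)"
  defines "M \<equiv> R + transpose B ** P ** B"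
  defines "w \<equiv> matrix_inv M *v (transpose B *v (P *v (A *v x)))"
  shows "x \<bullet> (riccati A B R P S' *v x) + (z - w) \<bullet> (M *v (z - w))
    = (A *v x - B *v z) \<bullet> (P *v (A *v x - B *v z)) + z \<bullet> (R *v z) + x \<bullet> (S' *v x)"
proof -
  define y where "y = A *v x"
  define g where "g = transpose B *v (P *v y)"
  have "sym_mat M"
    using P R unfolding M_def by (simp add: sym_mat_def transpose_add matrix_transpose_mul matrix_mul_assoc)
  have "M *v w = (M ** matrix_inv M) *v g"
    unfolding w_def g_def y_def by (rule matrix_vector_mul_assoc)
  then have Mw: "M *v w = g"
    unfolding M_def by (simp add: matrix_inv_right[OF inv] matrix_vector_mul_lid)
  have B_g: "(B *v v) \<bullet> (P *v y) = v \<bullet> g" for v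
    unfolding g_def by (simp add: inner_vector_matrix_mult)
  have "x \<bullet> (riccati A B R P S' *v x) = y \<bullet> (P *v y) - (P *v y) \<bullet> (B *v w) + x \<bullet> (S' *v x)"
    unfolding riccati_def y_def w_def M_def
    by (simp add: matrix_vector_mult_add_rdistrib matrix_vector_mult_diff_rdistrib inner_add_right
        inner_diff_right matrix_vector_mul_assoc[symmetric] inner_vector_matrix_mult
        inner_sym_mat[OF P])
  also have "\<dots> = y \<bullet> (P *v y) - g \<bullet> w + x \<bullet> (S' *v x)"
    using B_g[of w] by (simp add: inner_commute)
  finally have ric: "x \<bullet> (riccati A B R P S' *v x) = y \<bullet> (P *v y) - g \<bullet> w + x \<bullet> (S' *v x)" .
  have "(y - B *v z) \<bullet> (P *v (y - B *v z))
      = y \<bullet> (P *v y) - 2 * (z \<bullet> g) + (B *v z) \<bullet> (P *v (B *v z))"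
    using B_g[of z] inner_sym_mat[OF P, of y "B *v z"]
    by (simp add: matrix_vector_mult_diff_distrib inner_diff_left inner_diff_right inner_commute)
  moreover have "z \<bullet> (M *v z) = z \<bullet> (R *v z) + (B *v z) \<bullet> (P *v (B *v z))"
    unfolding M_def
    by (simp add: matrix_vector_mult_add_rdistrib inner_add_right quadratic_form_congruence)
  moreover have "(z - w) \<bullet> (M *v (z - w)) = z \<bullet> (M *v z) - 2 * (z \<bullet> g) + g \<bullet> w"
    using inner_sym_mat[OF \<open>sym_mat M\<close>, of w z] Mw
    by (simp add: matrix_vector_mult_diff_distrib inner_diff_left inner_diff_right inner_commute)
  ultimately show ?thesis
    using ric unfolding y_def by linarith
qed

lemma riccati_quadratic_form_le:
  fixes A :: "real^'n^'n" and B :: "real^'m^'n" and R :: "real^'m^'m"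
  assumes "psd_mat P" "pd_mat R"
  shows "x \<bullet> (riccati A B R P S' *v x)
    \<le> (A *v x - B *v z) \<bullet> (P *v (A *v x - B *v z)) + z \<bullet> (R *v z) + x \<bullet> (S' *v x)"
proof -
  have P: "sym_mat P"
    using assms(1) unfolding psd_mat_def by simp
  have R: "sym_mat R"
    using assms(2) unfolding pd_mat_def by simp
  obtain w where completion: "x \<bullet> (riccati A B R P S' *v x)
      + (z - w) \<bullet> ((R + transpose B ** P ** B) *v (z - w))
      = (A *v x - B *v z) \<bullet> (P *v (A *v x - B *v z)) + z \<bullet> (R *v z) + x \<bullet> (S' *v x)"
    using riccati_completion_of_squares[OF P R invertible_add_congruence[OF assms(2,1)]] by blast
  have "psd_mat (R + transpose B ** P ** B)"
    using psd_add_congruence[OF pd_imp_psd[OF assms(2)] assms(1)] .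
  then have "0 \<le> (z - w) \<bullet> ((R + transpose B ** P ** B) *v (z - w))"
    unfolding psd_mat_def by blast
  with completion show ?thesis
    by linarith
qed

lemma riccati_quadratic_form_ge:
  fixes A :: "real^'n^'n" and B :: "real^'m^'n" and R :: "real^'m^'m"
  assumes "psd_mat P" "pd_mat R"
  shows "x \<bullet> (S' *v x) \<le> x \<bullet> (riccati A B R P S' *v x)"
proof -
  have P: "sym_mat P"
    using assms(1) unfolding psd_mat_def by simp
  have R: "sym_mat R"
    using assms(2) unfolding pd_mat_def by simp
  define w where "w = matrix_inv (R + transpose B ** P ** B) *v (transpose B *v (P *v (A *v x)))"
  have "0 \<le> (A *v x - B *v w) \<bullet> (P *v (A *v x - B *v w))"
    using assms(1) unfolding psd_mat_def by blast
  moreover have "0 \<le> w \<bullet> (R *v w)"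
    using pd_imp_psd[OF assms(2)] unfolding psd_mat_def by blast
  moreover have "x \<bullet> (riccati A B R P S' *v x)
      = (A *v x - B *v w) \<bullet> (P *v (A *v x - B *v w)) + w \<bullet> (R *v w) + x \<bullet> (S' *v x)"
    using riccati_completion_of_squares[OF P R invertible_add_congruence[OF assms(2,1)],
        where A = A and B = B and x = x and S' = S' and z = w]
    unfolding w_def by simp
  ultimately show ?thesis
    by linarith
qed

lemma psd_riccati:
  fixes A :: "real^'n^'n" and B :: "real^'m^'n" and R :: "real^'m^'m"
  assumes "psd_mat P" "pd_mat R" "psd_mat S'"
  shows "psd_mat (riccati A B R P S')"
proof -
  have "sym_mat (riccati A B R P S')"
    using assms pd_imp_psd[OF assms(2)] invertible_add_congruence[OF assms(2,1)]
    unfolding psd_mat_def by (intro sym_riccati) auto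
  moreover have "0 \<le> x \<bullet> (riccati A B R P S' *v x)" for x
    using riccati_quadratic_form_ge[OF assms(1,2), of x S' A] assms(3)
    unfolding psd_mat_def by (meson order_trans)
  ultimately show ?thesis
    unfolding psd_mat_def by blast
qed

section \<open>A uniform bound on the inexact value iteration\<close>

lemma psd_inexact_vi:
  assumes "pd_mat R" "psd_mat P0" "\<And>k. psd_mat (S + D k)"
  shows "psd_mat (inexact_vi A B R S P0 D k)"
proof (induction k)
  case 0
  then show ?case
    using assms(2) by simp
next
  case (Suc k)
  have "inexact_vi A B R S P0 D (Suc k) = riccati A B R (inexact_vi A B R S P0 D k) (S + D k)"
    by (simp add: riccati_def add.assoc)
  then show ?case
    using psd_riccati[OF Suc assms(1,3)] by simp
qed

lemma quadratic_bound_from_recursion: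
  fixes f :: "nat \<Rightarrow> 'a::real_normed_vector \<Rightarrow> real" and L :: "'a \<Rightarrow> 'a"
  assumes f0: "\<And>x. f 0 x \<le> a * norm x ^ 2"
    and f_Suc: "\<And>k x. f (Suc k) x \<le> f k (L x) + b * norm x ^ 2"
    and decay: "\<And>k x. norm ((L ^^ k) x) \<le> c * r ^ k * norm x"
    and "0 \<le> a" "0 \<le> b" "0 \<le> r" "r < 1"
  shows "f k x \<le> c\<^sup>2 * (a + b / (1 - r\<^sup>2)) * norm x ^ 2"
proof -
  have unrolled: "f k x \<le> a * norm ((L ^^ k) x) ^ 2 + b * (\<Sum>j<k. norm ((L ^^ j) x) ^ 2)" for k x
  proof (induction k arbitrary: x)
    case 0
    then show ?case
      using f0 by simp
  next
    case (Suc k)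
    have "f (Suc k) x \<le> a * norm ((L ^^ k) (L x)) ^ 2 + b * (\<Sum>j<k. norm ((L ^^ j) (L x)) ^ 2)
        + b * norm x ^ 2"
      using f_Suc[of k x] Suc[of "L x"] by simp
    also have "\<dots> = a * norm ((L ^^ Suc k) x) ^ 2 + b * (\<Sum>j<Suc k. norm ((L ^^ j) x) ^ 2)"
      unfolding sum.lessThan_Suc_shift funpow_0 funpow_Suc_right comp_apply
      by (simp add: algebra_simps)
    finally show ?case .
  qed
  have sq: "norm ((L ^^ j) x) ^ 2 \<le> c\<^sup>2 * (r\<^sup>2) ^ j * norm x ^ 2" for j
  proof -
    have "norm ((L ^^ j) x) ^ 2 \<le> (c * r ^ j * norm x) ^ 2"
      using decay[of j x] by (intro power_mono) auto
    then show ?thesis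
      by (simp add: power_mult_distrib power_mult[symmetric] mult.commute)
  qed
  have r2: "0 \<le> r\<^sup>2" "r\<^sup>2 < 1"
    using \<open>0 \<le> r\<close> \<open>r < 1\<close> by (auto simp: power_less_one_iff)
  have "(\<Sum>j<k. norm ((L ^^ j) x) ^ 2) \<le> c\<^sup>2 * norm x ^ 2 * (\<Sum>j<k. (r\<^sup>2) ^ j)"
    using sq by (simp add: sum_distrib_left sum_mono algebra_simps)
  also have "\<dots> \<le> c\<^sup>2 * norm x ^ 2 * (1 / (1 - r\<^sup>2))"
    using r2 by (intro mult_left_mono) (auto simp: sum_gp_strict divide_right_mono)
  finally have "b * (\<Sum>j<k. norm ((L ^^ j) x) ^ 2) \<le> b * (c\<^sup>2 * norm x ^ 2 * (1 / (1 - r\<^sup>2)))"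
    using \<open>0 \<le> b\<close> by (rule mult_left_mono)
  moreover have "a * norm ((L ^^ k) x) ^ 2 \<le> a * (c\<^sup>2 * norm x ^ 2)"
  proof -
    have "(r\<^sup>2) ^ k \<le> 1"
      using r2 by (simp add: power_le_one)
    then have "c\<^sup>2 * (r\<^sup>2) ^ k * norm x ^ 2 \<le> c\<^sup>2 * 1 * norm x ^ 2"
      by (intro mult_right_mono mult_left_mono) auto
    with sq[of k] \<open>0 \<le> a\<close> show ?thesis
      by (simp add: mult_left_mono)
  qed
  moreover have "a * (c\<^sup>2 * norm x ^ 2) + b * (c\<^sup>2 * norm x ^ 2 * (1 / (1 - r\<^sup>2)))
      = c\<^sup>2 * (a + b / (1 - r\<^sup>2)) * norm x ^ 2"
    by (simp add: algebra_simps)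
  ultimately show ?thesis
    using unrolled[of k x] by linarith
qed

lemma inexact_vi_quadratic_form_le:
  fixes A :: "real^'n^'n" and B :: "real^'m^'n" and K :: "real^'n^'m"
  assumes R: "pd_mat R" and P0: "psd_mat P0" and SD: "\<And>k. psd_mat (S + D k)"
    and D: "\<And>k x. x \<bullet> (D k *v x) \<le> \<delta> * (x \<bullet> x)" and "0 \<le> \<delta>"
    and decay: "\<And>k x. norm (((*v) (A - B ** K) ^^ k) x) \<le> c * r ^ k * norm x"
    and "0 \<le> r" "r < 1"
  shows "x \<bullet> (inexact_vi A B R S P0 D k *v x)
    \<le> c\<^sup>2 * (spec_norm P0 + (spec_norm (transpose K ** R ** K) + spec_norm S + \<delta>) / (1 - r\<^sup>2))
      * (x \<bullet> x)"
proof -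
  let ?P = "inexact_vi A B R S P0 D"
  let ?L = "A - B ** K"
  let ?\<gamma> = "spec_norm (transpose K ** R ** K) + spec_norm S + \<delta>"
  have step: "x \<bullet> (?P (Suc k) *v x) \<le> (?L *v x) \<bullet> (?P k *v (?L *v x)) + ?\<gamma> * norm x ^ 2" for k x
  proof -
    have "?L *v x = A *v x - B *v (K *v x)"
      by (simp add: matrix_vector_mult_diff_rdistrib matrix_vector_mul_assoc)
    then have "x \<bullet> (riccati A B R (?P k) S *v x)
        \<le> (?L *v x) \<bullet> (?P k *v (?L *v x)) + x \<bullet> ((transpose K ** R ** K) *v x) + x \<bullet> (S *v x)"
      using riccati_quadratic_form_le[OF psd_inexact_vi[OF R P0 SD] R,
          where x = x and S' = S and z = "K *v x"]
      by (simp add: quadratic_form_congruence)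
    moreover have "x \<bullet> ((transpose K ** R ** K) *v x) \<le> spec_norm (transpose K ** R ** K) * (x \<bullet> x)"
      "x \<bullet> (S *v x) \<le> spec_norm S * (x \<bullet> x)"
      using abs_quadratic_form_le_spec_norm abs_le_D1 by blast+
    moreover have "x \<bullet> (?P (Suc k) *v x) = x \<bullet> (riccati A B R (?P k) S *v x) + x \<bullet> (D k *v x)"
      by (simp add: matrix_vector_mult_add_rdistrib inner_add_right)
    ultimately show ?thesis
      using D[where k = k and x = x] by (simp add: power2_norm_eq_inner algebra_simps)
  qed
  have "x \<bullet> (P0 *v x) \<le> spec_norm P0 * norm x ^ 2" for x
    using abs_quadratic_form_le_spec_norm[where x = x and M = P0] by (simp add: power2_norm_eq_inner)
  with step decay have "x \<bullet> (?P k *v x) \<le> c\<^sup>2 * (spec_norm P0 + ?\<gamma> / (1 - r\<^sup>2)) * norm x ^ 2"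
    using spec_norm_nonneg[of P0] spec_norm_nonneg[of "transpose K ** R ** K"] spec_norm_nonneg[of S]
      \<open>0 \<le> \<delta>\<close> \<open>0 \<le> r\<close> \<open>r < 1\<close>
    by (intro quadratic_bound_from_recursion[where f = "\<lambda>k x. x \<bullet> (?P k *v x)" and L = "(*v) ?L"])
      simp_all
  then show ?thesis
    by (simp add: power2_norm_eq_inner)
qed

lemma abs_entry_le_if_mem_reach_set:
  fixes A :: "real^'n^'n" and B :: "real^'m^'n" and K :: "real^'n^'m"
  assumes S: "pd_mat S" and R: "pd_mat R" and P0: "psd_mat P0"
    and decay: "\<And>k x. norm (((*v) (A - B ** K) ^^ k) x) \<le> c * r ^ k * norm x"
    and "0 \<le> r" "r < 1"
    and "P \<in> reach_set A B R S P0"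
  shows "\<bar>P $ i $ j\<bar> \<le> c\<^sup>2 * (spec_norm P0
    + (spec_norm (transpose K ** R ** K) + spec_norm S + lambda_min S) / (1 - r\<^sup>2))"
proof -
  obtain D k where D: "\<And>l. sym_mat (D l)" "bdd_above (range (\<lambda>l. spec_norm (D l)))"
      "(SUP l. spec_norm (D l)) < lambda_min S" and P: "P = inexact_vi A B R S P0 D k"
    using assms(7) unfolding reach_set_def by blast
  have "sym_mat S"
    using S unfolding pd_mat_def by simp
  have D_le: "spec_norm (D l) \<le> lambda_min S" for l
    using cSUP_upper[OF UNIV_I D(2), of l] D(3) by simp
  have "x \<bullet> (D l *v x) \<le> lambda_min S * (x \<bullet> x)" for l x
  proof -
    have "x \<bullet> (D l *v x) \<le> spec_norm (D l) * (x \<bullet> x)"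
      using abs_quadratic_form_le_spec_norm by (rule abs_le_D1)
    also have "\<dots> \<le> lambda_min S * (x \<bullet> x)"
      using D_le[of l] by (simp add: mult_right_mono)
    finally show ?thesis .
  qed
  moreover have "0 \<le> lambda_min S"
    using spec_norm_nonneg D_le order_trans by blast
  moreover have SD: "psd_mat (S + D l)" for l
    using psd_add_if_spec_norm_le_lambda_min[OF \<open>sym_mat S\<close> D(1) D_le] .
  ultimately show ?thesis
    unfolding P using assms(5,6)
    by (intro abs_entry_le_if_quadratic_form_le psd_inexact_vi[OF R P0 SD]
        inexact_vi_quadratic_form_le[OF R P0 SD _ _ decay])
qed

theorem corollary1:
  fixes A :: "real^'n::finite^'n" and B :: "real^'m::finite^'n"
    and S :: "real^'n^'n" and R :: "real^'m^'m" and P0 :: "real^'n^'n"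
  assumes "pd_mat S" and "pd_mat R" and "stabilizable A B" and "psd_mat P0"
  shows "compact (closure (reach_set A B R S P0))"
proof -
  obtain K :: "real^'n^'m" where "schur_stable (A - B ** K)"
    using assms(3) unfolding stabilizable_def by blast
  then obtain r c where "0 \<le> r" "r < 1"
    and decay: "\<And>k x. norm (((*v) (A - B ** K) ^^ k) x) \<le> c * r ^ k * norm x"
    by (rule schur_stable_power_decay) blast
  then have "reach_set A B R S P0 \<subseteq> {P. \<forall>i j. \<bar>P $ i $ j\<bar> \<le> c\<^sup>2 * (spec_norm P0
      + (spec_norm (transpose K ** R ** K) + spec_norm S + lambda_min S) / (1 - r\<^sup>2))}"
    using abs_entry_le_if_mem_reach_set[OF assms(1,2,4) decay] by blast
  then have "bounded (reach_set A B R S P0)"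
    using bounded_entrywise bounded_subset by blast
  then show ?thesis
    by (simp add: compact_eq_bounded_closed bounded_closure)
qed

end
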